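(* Let $h\in\mathbb N$ and $u,v\in\mathfrak S_n$ with $u<v$, and let $F$ be an $h$-flipclass of paths from $u$ to $v$. The following are equivalent: (1) the map $i_{TS_F}:F\to P^{TS_F}_h((u,0),(v,h))$ is bijective, i.e. every path of $TS_F$ from $(u,0)$ to $(v,h)$ is effective; (2) for all vertices $(a,i),(b,i+2)$ of $TS_F$ with $(a,i)\le(b,i+2)$ in the poset induced by $TS_F$, the interval $[(a,i),(b,i+2)]$ is a diamond (contains exactly two elements besides its endpoints); and the flip operators $\bar f_1,\dots,\bar f_{h-1}$ act transitively on $P^{TS_F}_h((u,0),(v,h))$, where $\bar f_i$ sends a path $((a_0,0),\dots,(a_h,h))$ to the path obtained by replacing $(a_i,i)$ by the other middle element of the diamond $[(a_{i-1},i-1),(a_{i+1},i+1)]$.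
   Context: $\mathfrak S_n$ is the symmetric group on $[n]$, $T$ its transpositions, $\ell$ the length w.r.t. simple transpositions. The Bruhat graph $B(\mathfrak S_n)$ has an edge $x\xrightarrow{t}y$ iff $yx^{-1}=t\in T$ and $\ell(x)<\ell(y)$; Bruhat order: $x\le y$ iff there is a directed path from $x$ to $y$. $P_h(u,v)$ is the set of paths $u=x_0\to\cdots\to x_h=v$ of length $h$. Between two fixed vertices there are $0$ or $2$ paths of length $2$, each the flip of the other; the $i$-th flip operator $f_i$ on $P_h(u,v)$ replaces $x_{i-1}\to x_i\to x_{i+1}$ by its flip; orbits of $\langle f_1,\dots,f_{h-1}\rangle$ on $P_h(u,v)$ are the $h$-flipclasses of paths from $u$ to $v$. The time-support graph $TS_F$ has vertices $(a,i)$ ($0\le i\le h$) such that some path $(x_0,\dots,x_h)\in F$ has $x_i=a$, and edges $(a,i)\xrightarrow{t}(b,i+1)$ whenever some path of $F$ contains $x_i=a\xrightarrow{t}b=x_{i+1}$; it is acyclic and induces a partial order (reachability) on its vertices. $P^{TS_F}_h((u,0),(v,h))$ is the set of paths of length $h$ from $(u,0)$ to $(v,h)$ in $TS_F$, and $i_{TS_F}$ sends $(x_0,\dots,x_h)\in F$ to $((x_0,0),\dots,(x_h,h))$ (it is always injective). A path of $TS_F$ is effective if it is a subpath of $i_{TS_F}(\Gamma)$ for some $\Gamma\in F$. *)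

theory Defs
  imports "HOL-Combinatorics.Combinatorics"
begin

type_synonym perm = "nat \<Rightarrow> nat"

definition Sn :: "nat \<Rightarrow> perm set" where
  "Sn n = {p. p permutes {1..n}}"

definition Trans :: "nat \<Rightarrow> perm set" where
  "Trans n = {Transposition.transpose i j | i j. i \<in> {1..n} \<and> j \<in> {1..n} \<and> i \<noteq> j}"

definition len :: "nat \<Rightarrow> perm \<Rightarrow> nat" where
  "len n x = (LEAST k. \<exists>ws. length ws = k \<and> set ws \<subseteq> {1..<n} \<and>
       x = foldr (\<lambda>i f. Transposition.transpose i (Suc i) \<circ> f) ws id)"

definition bedge :: "nat \<Rightarrow> perm \<Rightarrow> perm \<Rightarrow> bool" where
  "bedge n x y \<longleftrightarrow> x \<in> Sn n \<and> y \<in> Sn n \<and> y \<circ> inv x \<in> Trans n \<and> len n x < len n y"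

definition bruhat_less :: "nat \<Rightarrow> perm \<Rightarrow> perm \<Rightarrow> bool" where
  "bruhat_less n u v \<longleftrightarrow> (u, v) \<in> {(x, y). bedge n x y}\<^sup>+"

definition Paths :: "nat \<Rightarrow> nat \<Rightarrow> perm \<Rightarrow> perm \<Rightarrow> perm list set" where
  "Paths n h u v = {xs. length xs = Suc h \<and> xs ! 0 = u \<and> xs ! h = v \<and>
       (\<forall>i<h. bedge n (xs ! i) (xs ! Suc i))}"

definition other_mid :: "nat \<Rightarrow> perm \<Rightarrow> perm \<Rightarrow> perm \<Rightarrow> perm" where
  "other_mid n a c b = (THE y. y \<noteq> b \<and> bedge n a y \<and> bedge n y c)"

definition flip :: "nat \<Rightarrow> nat \<Rightarrow> perm list \<Rightarrow> perm list" where
  "flip n i xs = xs[i := other_mid n (xs ! (i - 1)) (xs ! Suc i) (xs ! i)]"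

definition flip_rel :: "nat \<Rightarrow> nat \<Rightarrow> perm \<Rightarrow> perm \<Rightarrow> (perm list \<times> perm list) set" where
  "flip_rel n h u v = {(xs, flip n i xs) | xs i. xs \<in> Paths n h u v \<and> 1 \<le> i \<and> i < h}"

text \<open>h-flipclasses: orbits of the group generated by the involutions f_1..f_{h-1} on P_h(u,v).\<close>
definition is_flipclass :: "nat \<Rightarrow> nat \<Rightarrow> perm \<Rightarrow> perm \<Rightarrow> perm list set \<Rightarrow> bool" where
  "is_flipclass n h u v F \<longleftrightarrow>
     (\<exists>xs \<in> Paths n h u v. F = {ys. (xs, ys) \<in> (flip_rel n h u v)\<^sup>*})"

definition TS_vert :: "nat \<Rightarrow> perm list set \<Rightarrow> (perm \<times> nat) set" where
  "TS_vert h F = {(xs ! i, i) | xs i. xs \<in> F \<and> i \<le> h}"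

definition TS_edge :: "nat \<Rightarrow> perm list set \<Rightarrow> ((perm \<times> nat) \<times> (perm \<times> nat)) set" where
  "TS_edge h F = {((xs ! i, i), (xs ! Suc i, Suc i)) | xs i. xs \<in> F \<and> i < h}"

definition TS_le :: "nat \<Rightarrow> perm list set \<Rightarrow> perm \<times> nat \<Rightarrow> perm \<times> nat \<Rightarrow> bool" where
  "TS_le h F p q \<longleftrightarrow> (p, q) \<in> (TS_edge h F)\<^sup>*"

definition TS_interval :: "nat \<Rightarrow> perm list set \<Rightarrow> perm \<times> nat \<Rightarrow> perm \<times> nat \<Rightarrow> (perm \<times> nat) set" where
  "TS_interval h F p q = {r \<in> TS_vert h F. TS_le h F p r \<and> TS_le h F r q}"

definition TS_paths :: "nat \<Rightarrow> perm list set \<Rightarrow> perm \<Rightarrow> perm \<Rightarrow> (perm \<times> nat) list set" where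
  "TS_paths h F u v = {ps. length ps = Suc h \<and> ps ! 0 = (u, 0) \<and> ps ! h = (v, h) \<and>
       (\<forall>i<h. (ps ! i, ps ! Suc i) \<in> TS_edge h F)}"

definition i_TS :: "nat \<Rightarrow> perm list \<Rightarrow> (perm \<times> nat) list" where
  "i_TS h xs = map (\<lambda>i. (xs ! i, i)) [0..<Suc h]"

definition TS_flip :: "nat \<Rightarrow> perm list set \<Rightarrow> nat \<Rightarrow> (perm \<times> nat) list \<Rightarrow> (perm \<times> nat) list" where
  "TS_flip h F i ps = ps[i := (THE s. s \<in> TS_interval h F (ps ! (i - 1)) (ps ! Suc i)
                                       - {ps ! (i - 1), ps ! Suc i, ps ! i})]"

definition TS_flip_rel :: "nat \<Rightarrow> perm list set \<Rightarrow> perm \<Rightarrow> perm \<Rightarrow> ((perm \<times> nat) list \<times> (perm \<times> nat) list) set" where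
  "TS_flip_rel h F u v = {(ps, TS_flip h F i ps) | ps i. ps \<in> TS_paths h F u v \<and> 1 \<le> i \<and> i < h}"

definition TS_flips_transitive :: "nat \<Rightarrow> perm list set \<Rightarrow> perm \<Rightarrow> perm \<Rightarrow> bool" where
  "TS_flips_transitive h F u v \<longleftrightarrow>
     (\<forall>ps \<in> TS_paths h F u v. \<forall>qs \<in> TS_paths h F u v. (ps, qs) \<in> (TS_flip_rel h F u v)\<^sup>*)"

end

(*
  Length in S_n is the number of inversions, so for e < f the step x -> (e f) x is a Bruhat
  edge iff x^-1 e < x^-1 f. A case analysis on whether the two transpositions of a path
  a -> c -> b share a letter shows that exactly two vertices lie between a and b; hence the
  flips are well-defined involutions.

  If i_TS is onto, every interval [(a,i),(b,i+2)] of TS_F lies on an effective path; the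
  middle vertices of this path and of its flip are two elements of the interval, and the
  interval holds at most the two Bruhat middles of a and b, so it is a diamond. Under the
  diamond condition the flip of an effective path of TS_F is the image of the flip of the
  underlying path, so the image of the single flip orbit F is a single orbit of the flips on
  TS paths, and transitivity amounts to surjectivity.
*)
theory Submission
  imports Defs
begin

definition discordant :: "perm \<Rightarrow> nat \<Rightarrow> nat \<Rightarrow> bool" where
  "discordant x k l \<longleftrightarrow> (k < l \<and> x l < x k) \<or> (l < k \<and> x k < x l)"

(* Ordered pairs are counted, so this is twice the number of inversions of x. *)
definition discord_count :: "nat \<Rightarrow> perm \<Rightarrow> nat" where
  "discord_count n x = (\<Sum>k\<in>{1..n}. \<Sum>l\<in>{1..n}. of_bool (discordant x k l))"

definition discord_through :: "nat \<Rightarrow> perm \<Rightarrow> nat \<Rightarrow> nat \<Rightarrow> nat" where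
  "discord_through n x p q =
     (\<Sum>m\<in>{1..n} - {p, q}. of_bool (discordant x p m) + of_bool (discordant x q m))
     + of_bool (discordant x p q)"

lemma discordant_commute: "discordant x k l \<longleftrightarrow> discordant x l k"
  by (auto simp: discordant_def)

lemma not_discordant_self [simp]: "\<not> discordant x k k"
  by (simp add: discordant_def)

lemma discord_count_split:
  assumes "p \<in> {1..n}" "q \<in> {1..n}" "p \<noteq> q"
  shows "discord_count n x =
    (\<Sum>k\<in>{1..n} - {p, q}. \<Sum>l\<in>{1..n} - {p, q}. of_bool (discordant x k l)) + 2 * discord_through n x p q"
proof -
  let ?A = "{1..n} - {p, q}"
  let ?d = "\<lambda>k l. of_bool (discordant x k l) :: nat"
  have split: "(\<Sum>k\<in>{1..n}. g k) = (\<Sum>k\<in>?A. g k) + g p + g q" for g :: "nat \<Rightarrow> nat"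
  proof -
    have "(\<Sum>k\<in>{1..n}. g k) = g p + (\<Sum>k\<in>{1..n} - {p}. g k)"
      using assms(1) by (simp add: sum.remove)
    also have "(\<Sum>k\<in>{1..n} - {p}. g k) = g q + (\<Sum>k\<in>{1..n} - {p} - {q}. g k)"
      using assms(2,3) by (simp add: sum.remove)
    also have "{1..n} - {p} - {q} = ?A" by auto
    finally show ?thesis by (simp add: add_ac)
  qed
  have sym: "(\<Sum>k\<in>?A. ?d k p + ?d k q) = (\<Sum>m\<in>?A. ?d p m + ?d q m)"
    by (simp add: discordant_commute)
  have "discord_count n x = (\<Sum>k\<in>?A. \<Sum>l\<in>?A. ?d k l) + (\<Sum>k\<in>?A. ?d k p + ?d k q)
      + (\<Sum>m\<in>?A. ?d p m + ?d q m) + ?d p q + ?d q p"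
    unfolding discord_count_def split by (simp add: sum.distrib add_ac)
  then show ?thesis
    unfolding sym discord_through_def by (simp add: discordant_commute[of x q p])
qed

lemma discord_count_agree:
  assumes "p \<in> {1..n}" "q \<in> {1..n}" "p \<noteq> q" and agree: "\<And>m. m \<noteq> p \<Longrightarrow> m \<noteq> q \<Longrightarrow> y m = x m"
  shows "discord_count n y + 2 * discord_through n x p q = discord_count n x + 2 * discord_through n y p q"
proof -
  have "(\<Sum>k\<in>{1..n} - {p, q}. \<Sum>l\<in>{1..n} - {p, q}. of_bool (discordant y k l))
      = (\<Sum>k\<in>{1..n} - {p, q}. \<Sum>l\<in>{1..n} - {p, q}. of_bool (discordant x k l) :: nat)"
    by (intro sum.cong refl) (simp add: discordant_def agree)
  then show ?thesis
    using discord_count_split[OF assms(1-3), of x] discord_count_split[OF assms(1-3), of y] by simp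
qed

lemma transpose_comp_apply_other:
  assumes "x permutes S" "m \<noteq> inv x i" "m \<noteq> inv x j"
  shows "(Transposition.transpose i j \<circ> x) m = x m"
  using assms by (metis comp_apply permutes_inverses(2) transpose_apply_other)

lemma inv_transpose_comp:
  "x permutes S \<Longrightarrow> inv (Transposition.transpose i j \<circ> x) = inv x \<circ> Transposition.transpose i j"
  by (simp add: o_inv_distrib permutes_bij)

lemma discord_count_adjacent_swap_ascent:
  assumes x: "x permutes {1..n}" and i: "1 \<le> i" "i < n" and asc: "inv x i < inv x (Suc i)"
  shows "discord_count n (Transposition.transpose i (Suc i) \<circ> x) = discord_count n x + 2"
proof -
  define y where "y = Transposition.transpose i (Suc i) \<circ> x"
  let ?p = "inv x i" and ?q = "inv x (Suc i)"
  have ip: "inv x permutes {1..n}" using x by (rule permutes_inv)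
  have pq: "?p \<in> {1..n}" "?q \<in> {1..n}" "?p \<noteq> ?q"
    using i asc permutes_in_image[OF ip, of i] permutes_in_image[OF ip, of "Suc i"] by simp_all
  have xpq: "x ?p = i" "x ?q = Suc i" "y ?p = Suc i" "y ?q = i"
    using x by (simp_all add: y_def permutes_inverses)
  have agree: "y m = x m" if "m \<noteq> ?p" "m \<noteq> ?q" for m
    using transpose_comp_apply_other[OF x that] by (simp add: y_def)
  \<comment> \<open>no value lies strictly between i and Suc i, so other positions do not notice the swap\<close>
  have "(\<Sum>m\<in>{1..n} - {?p, ?q}. of_bool (discordant y ?p m) + of_bool (discordant y ?q m))
      = (\<Sum>m\<in>{1..n} - {?p, ?q}. of_bool (discordant x ?p m) + of_bool (discordant x ?q m) :: nat)"
  proof (rule sum.cong[OF refl])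
    fix m assume "m \<in> {1..n} - {?p, ?q}"
    then have m: "m \<noteq> ?p" "m \<noteq> ?q" "x m \<noteq> i" "x m \<noteq> Suc i"
      using permutes_inv_eq[OF x, of i m] permutes_inv_eq[OF x, of "Suc i" m] by auto
    show "of_bool (discordant y ?p m) + of_bool (discordant y ?q m)
        = (of_bool (discordant x ?p m) + of_bool (discordant x ?q m) :: nat)"
      using m(3,4) unfolding discordant_def xpq agree[OF m(1,2)] by auto
  qed
  moreover have "discordant y ?p ?q" "\<not> discordant x ?p ?q"
    using asc unfolding discordant_def xpq by auto
  ultimately have "discord_through n y ?p ?q = discord_through n x ?p ?q + 1"
    unfolding discord_through_def by simp
  moreover have "discord_count n y + 2 * discord_through n x ?p ?q
      = discord_count n x + 2 * discord_through n y ?p ?q"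
    by (rule discord_count_agree[OF pq agree])
  ultimately show ?thesis by (simp add: y_def)
qed

lemma discord_count_adjacent_swap_descent:
  assumes x: "x permutes {1..n}" and i: "1 \<le> i" "i < n" and desc: "inv x (Suc i) < inv x i"
  shows "discord_count n x = discord_count n (Transposition.transpose i (Suc i) \<circ> x) + 2"
proof -
  define y where "y = Transposition.transpose i (Suc i) \<circ> x"
  have y: "y permutes {1..n}"
    unfolding y_def using i by (intro permutes_compose[OF x] permutes_swap_id) auto
  have "inv y i < inv y (Suc i)"
    using desc by (simp add: y_def inv_transpose_comp[OF x])
  from discord_count_adjacent_swap_ascent[OF y i this] show ?thesis
    by (simp add: y_def o_assoc)
qed

lemma discord_count_swap_increases:
  assumes x: "x permutes {1..n}" and ij: "i \<in> {1..n}" "j \<in> {1..n}" "i < j"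
    and asc: "inv x i < inv x j"
  shows "discord_count n x < discord_count n (Transposition.transpose i j \<circ> x)"
proof -
  define y where "y = Transposition.transpose i j \<circ> x"
  let ?p = "inv x i" and ?q = "inv x j"
  have ip: "inv x permutes {1..n}" using x by (rule permutes_inv)
  have pq: "?p \<in> {1..n}" "?q \<in> {1..n}" "?p \<noteq> ?q"
    using ij asc permutes_in_image[OF ip, of i] permutes_in_image[OF ip, of j] by simp_all
  have xpq: "x ?p = i" "x ?q = j" "y ?p = j" "y ?q = i"
    using x by (simp_all add: y_def permutes_inverses)
  have agree: "y m = x m" if "m \<noteq> ?p" "m \<noteq> ?q" for m
    using transpose_comp_apply_other[OF x that] by (simp add: y_def)
  \<comment> \<open>a position strictly between ?p and ?q whose value lies strictly between i and j
    gains two discordances with ?p and ?q, every other position keeps its number\<close>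
  have "(\<Sum>m\<in>{1..n} - {?p, ?q}. of_bool (discordant x ?p m) + of_bool (discordant x ?q m))
     \<le> (\<Sum>m\<in>{1..n} - {?p, ?q}. of_bool (discordant y ?p m) + of_bool (discordant y ?q m) :: nat)"
  proof (rule sum_mono)
    fix m assume "m \<in> {1..n} - {?p, ?q}"
    then have m: "m \<noteq> ?p" "m \<noteq> ?q" "x m \<noteq> i" "x m \<noteq> j"
      using permutes_inv_eq[OF x, of i m] permutes_inv_eq[OF x, of j m] by auto
    show "of_bool (discordant x ?p m) + of_bool (discordant x ?q m)
        \<le> (of_bool (discordant y ?p m) + of_bool (discordant y ?q m) :: nat)"
      using m ij(3) asc unfolding discordant_def xpq agree[OF m(1,2)]
      by (cases "m < ?p"; cases "m < ?q"; cases "x m < i"; cases "x m < j") auto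
  qed
  then have "discord_through n x ?p ?q < discord_through n y ?p ?q"
    using asc ij(3) unfolding discord_through_def discordant_def xpq by simp
  moreover have "discord_count n y + 2 * discord_through n x ?p ?q
      = discord_count n x + 2 * discord_through n y ?p ?q"
    by (rule discord_count_agree[OF pq agree])
  ultimately show ?thesis by (simp add: y_def)
qed

definition simple_word :: "nat list \<Rightarrow> perm" where
  "simple_word ws = foldr (\<lambda>i f. Transposition.transpose i (Suc i) \<circ> f) ws id"

lemma simple_word_Nil [simp]: "simple_word [] = id"
  and simple_word_Cons [simp]:
    "simple_word (i # ws) = Transposition.transpose i (Suc i) \<circ> simple_word ws"
  by (simp_all add: simple_word_def)

lemma simple_word_permutes: "set ws \<subseteq> {1..<n} \<Longrightarrow> simple_word ws permutes {1..n}"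
proof (induction ws)
  case Nil
  show ?case unfolding simple_word_Nil by (rule permutes_id)
next
  case (Cons i ws)
  then have "Transposition.transpose i (Suc i) permutes {1..n}"
    by (intro permutes_swap_id) auto
  moreover have "simple_word ws permutes {1..n}" using Cons by simp
  ultimately show ?case unfolding simple_word_Cons by (rule permutes_compose[rotated])
qed

lemma discord_count_id: "discord_count n id = 0"
  unfolding discord_count_def discordant_def by (intro sum.neutral ballI) auto

lemma discord_count_simple_word_le:
  "set ws \<subseteq> {1..<n} \<Longrightarrow> discord_count n (simple_word ws) \<le> 2 * length ws"
proof (induction ws)
  case Nil
  show ?case unfolding simple_word_Nil discord_count_id by simp
next
  case (Cons i ws)
  then have ws: "set ws \<subseteq> {1..<n}" and i: "1 \<le> i" "i < n" by auto
  have x: "simple_word ws permutes {1..n}" using simple_word_permutes[OF ws] .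
  have "inv (simple_word ws) i \<noteq> inv (simple_word ws) (Suc i)"
    using permutes_inv_eq[OF x] by (metis n_not_Suc_n)
  then have "discord_count n (simple_word (i # ws)) \<le> discord_count n (simple_word ws) + 2"
    using discord_count_adjacent_swap_ascent[OF x i] discord_count_adjacent_swap_descent[OF x i]
    by (cases "inv (simple_word ws) i < inv (simple_word ws) (Suc i)") auto
  with Cons.IH[OF ws] show ?case unfolding length_Cons mult_Suc_right by linarith
qed

lemma permutes_ascending_eq_id:
  assumes x: "x permutes {1..n}" and asc: "\<And>i. 1 \<le> i \<Longrightarrow> i < n \<Longrightarrow> inv x i < inv x (Suc i)"
  shows "x = id"
proof -
  have ip: "inv x permutes {1..n}" using x by (rule permutes_inv)
  have "k \<le> inv x k" if "k \<in> {1..n}" for k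
    using that
  proof (induction k)
    case 0
    then show ?case by simp
  next
    case (Suc k)
    show ?case
    proof (cases "k = 0")
      case True
      then show ?thesis using permutes_in_image[OF ip, of "Suc k"] Suc.prems by simp
    next
      case False
      then have "k \<le> inv x k" using Suc by simp
      moreover have "inv x k < inv x (Suc k)" using asc False Suc.prems by simp
      ultimately show ?thesis by simp
    qed
  qed
  then have "inv x = id" using permutes_natset_ge[OF ip] by blast
  then show ?thesis using permutes_inv_inv[OF x] by (metis inv_id)
qed

lemma simple_word_exists:
  "x permutes {1..n} \<Longrightarrow>
    \<exists>ws. set ws \<subseteq> {1..<n} \<and> x = simple_word ws \<and> discord_count n x = 2 * length ws"
proof (induction "discord_count n x" arbitrary: x rule: less_induct)
  case less
  show ?case
  proof (cases "x = id")
    case True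
    then show ?thesis using discord_count_id by (intro exI[of _ "[]"]) simp
  next
    case False
    then obtain i where i: "1 \<le> i" "i < n" and "\<not> inv x i < inv x (Suc i)"
      using permutes_ascending_eq_id[OF less.prems] by blast
    moreover have "inv x i \<noteq> inv x (Suc i)"
      using permutes_inv_eq[OF less.prems] by (metis n_not_Suc_n)
    ultimately have desc: "inv x (Suc i) < inv x i" by simp
    define y where "y = Transposition.transpose i (Suc i) \<circ> x"
    have y: "y permutes {1..n}"
      unfolding y_def using i by (intro permutes_compose[OF less.prems] permutes_swap_id) auto
    have d: "discord_count n x = discord_count n y + 2"
      using discord_count_adjacent_swap_descent[OF less.prems i desc] by (simp add: y_def)
    then obtain ws where ws: "set ws \<subseteq> {1..<n}" "y = simple_word ws" "discord_count n y = 2 * length ws"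
      using less.hyps[OF _ y] by auto
    have "x = Transposition.transpose i (Suc i) \<circ> y"
      by (simp add: y_def o_assoc)
    with ws d i show ?thesis
      by (intro exI[of _ "i # ws"]) auto
  qed
qed

lemma double_len_eq_discord_count:
  assumes x: "x permutes {1..n}"
  shows "2 * len n x = discord_count n x"
proof -
  obtain ws0 where ws0: "set ws0 \<subseteq> {1..<n}" "x = simple_word ws0" "discord_count n x = 2 * length ws0"
    using simple_word_exists[OF x] by blast
  have "len n x = length ws0"
    unfolding len_def simple_word_def[symmetric]
  proof (rule Least_equality)
    fix k assume "\<exists>ws. length ws = k \<and> set ws \<subseteq> {1..<n} \<and> x = simple_word ws"
    then show "length ws0 \<le> k" using discord_count_simple_word_le ws0 by fastforce
  qed (use ws0 in auto)
  with ws0 show ?thesis by simp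
qed

lemma len_less_transpose_comp_iff:
  assumes x: "x permutes {1..n}" and ef: "e \<in> {1..n}" "f \<in> {1..n}" "e \<noteq> f"
  shows "len n x < len n (Transposition.transpose e f \<circ> x) \<longleftrightarrow> (e < f \<longleftrightarrow> inv x e < inv x f)"
proof -
  have ascending: "len n x < len n (Transposition.transpose i j \<circ> x) \<longleftrightarrow> inv x i < inv x j"
    if ij: "i \<in> {1..n}" "j \<in> {1..n}" "i < j" for i j
  proof -
    define y where "y = Transposition.transpose i j \<circ> x"
    have y: "y permutes {1..n}"
      unfolding y_def using ij by (intro permutes_compose[OF x] permutes_swap_id) auto
    have len: "2 * len n x = discord_count n x" "2 * len n y = discord_count n y"
      using double_len_eq_discord_count[OF x] double_len_eq_discord_count[OF y] .
    have "inv x i \<noteq> inv x j"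
      using ij(3) permutes_inv_eq[OF x] by (metis less_irrefl)
    then consider "inv x i < inv x j" | "inv x j < inv x i" by linarith
    then show ?thesis
    proof cases
      case 1
      with discord_count_swap_increases[OF x ij 1] len show ?thesis by (simp add: y_def)
    next
      case 2
      then have "inv y i < inv y j" by (simp add: y_def inv_transpose_comp[OF x])
      from discord_count_swap_increases[OF y ij this] have "discord_count n y < discord_count n x"
        by (simp add: y_def o_assoc)
      with 2 len show ?thesis by (simp add: y_def)
    qed
  qed
  show ?thesis
  proof (cases "e < f")
    case True
    with ascending ef show ?thesis by simp
  next
    case False
    then have "f < e" using ef(3) by simp
    moreover have "inv x e \<noteq> inv x f" using ef(3) permutes_inv_eq[OF x] by metis
    ultimately show ?thesis using ascending[of f e] ef by (auto simp: transpose_commute)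
  qed
qed

lemma transpose_comp_Sn:
  "a \<in> Sn n \<Longrightarrow> e \<in> {1..n} \<Longrightarrow> f \<in> {1..n} \<Longrightarrow> Transposition.transpose e f \<circ> a \<in> Sn n"
  unfolding Sn_def mem_Collect_eq by (rule permutes_compose[OF _ permutes_swap_id])

lemma bedge_transpose_comp_iff:
  assumes x: "x \<in> Sn n" and ef: "e \<in> {1..n}" "f \<in> {1..n}" "e \<noteq> f"
  shows "bedge n x (Transposition.transpose e f \<circ> x) \<longleftrightarrow> (e < f \<longleftrightarrow> inv x e < inv x f)"
proof -
  have xp: "x permutes {1..n}" using x by (simp add: Sn_def)
  have "Transposition.transpose e f \<circ> x \<circ> inv x = Transposition.transpose e f"
    by (simp add: o_assoc[symmetric] permutes_inv_o[OF xp])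
  moreover have "Transposition.transpose e f \<in> Trans n" using ef by (auto simp: Trans_def)
  ultimately show ?thesis
    using x transpose_comp_Sn[OF x ef(1,2)] len_less_transpose_comp_iff[OF xp ef]
    by (simp add: bedge_def)
qed

lemma bedgeE:
  assumes "bedge n x y"
  obtains e f where "e \<in> {1..n}" "f \<in> {1..n}" "e \<noteq> f" "y = Transposition.transpose e f \<circ> x"
proof -
  from assms have x: "x permutes {1..n}" and t: "y \<circ> inv x \<in> Trans n"
    by (auto simp: bedge_def Sn_def)
  from t obtain e f where ef: "e \<in> {1..n}" "f \<in> {1..n}" "e \<noteq> f"
      "y \<circ> inv x = Transposition.transpose e f"
    by (auto simp: Trans_def)
  have "y = y \<circ> inv x \<circ> x" by (simp add: o_assoc[symmetric] permutes_inv_o[OF x])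
  with ef that show ?thesis by simp
qed

lemma comp_permutes_cancel: "a permutes S \<Longrightarrow> f \<circ> a = g \<circ> a \<Longrightarrow> f = g"
  by (metis comp_id fun.map_comp permutes_inv_o(1))

lemma bedge_middle_transpose:
  assumes ay: "bedge n a y" and yb: "bedge n y b" and b: "b = w \<circ> a"
  obtains e f where "e \<in> {1..n}" "f \<in> {1..n}" "e \<noteq> f" "y = Transposition.transpose e f \<circ> a"
    "w e \<noteq> e" "w f \<noteq> f"
    "(w \<circ> Transposition.transpose e f) \<circ> (w \<circ> Transposition.transpose e f) = id"
proof -
  have a: "a permutes {1..n}" using ay by (simp add: bedge_def Sn_def)
  obtain e f where ef: "e \<in> {1..n}" "f \<in> {1..n}" "e \<noteq> f" "y = Transposition.transpose e f \<circ> a"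
    using bedgeE[OF ay] by metis
  obtain g h where gh: "g \<noteq> h" "b = Transposition.transpose g h \<circ> y"
    using bedgeE[OF yb] by metis
  have "(Transposition.transpose g h \<circ> Transposition.transpose e f) \<circ> a = w \<circ> a"
    using gh(2) ef(4) b by (simp add: o_assoc)
  then have w: "w = Transposition.transpose g h \<circ> Transposition.transpose e f"
    using comp_permutes_cancel[OF a] by metis
  then have wef: "w \<circ> Transposition.transpose e f = Transposition.transpose g h"
    by (simp add: o_assoc[symmetric])
  have "w \<noteq> id"
  proof
    assume "w = id"
    then have "b = a" using b by simp
    with ay yb show False by (simp add: bedge_def)
  qed
  then have "Transposition.transpose g h \<noteq> Transposition.transpose e f"
    using w by auto
  then have "w e \<noteq> e \<and> w f \<noteq> f"
    using w ef(3) by (auto simp: transpose_eq_iff transpose_commute)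
  with ef wef that show ?thesis by simp
qed

lemma bedge_transpose_comp_comp_iff:
  assumes a: "a \<in> Sn n" and ef: "e \<in> {1..n}" "f \<in> {1..n}" and gh: "g \<in> {1..n}" "h \<in> {1..n}" "g \<noteq> h"
  shows "bedge n (Transposition.transpose e f \<circ> a)
           (Transposition.transpose g h \<circ> (Transposition.transpose e f \<circ> a))
    \<longleftrightarrow> (g < h \<longleftrightarrow> inv a (Transposition.transpose e f g) < inv a (Transposition.transpose e f h))"
  using bedge_transpose_comp_iff[OF transpose_comp_Sn[OF a ef] gh] a
  by (simp add: inv_transpose_comp Sn_def)

lemma transpose_comp_neq:
  assumes "a permutes S" "Transposition.transpose e f x \<noteq> Transposition.transpose g h x"
  shows "Transposition.transpose e f \<circ> a \<noteq> Transposition.transpose g h \<circ> a"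
  using assms comp_permutes_cancel by metis

lemma bedge_middles_overlapping:
  assumes "\<alpha> \<noteq> \<beta>" "\<beta> \<noteq> \<delta>" "\<alpha> \<noteq> \<delta>"
    and b: "b = Transposition.transpose \<beta> \<delta> \<circ> Transposition.transpose \<alpha> \<beta> \<circ> a"
  shows "{y. bedge n a y \<and> bedge n y b} \<subseteq>
    {Transposition.transpose \<alpha> \<beta> \<circ> a, Transposition.transpose \<beta> \<delta> \<circ> a, Transposition.transpose \<alpha> \<delta> \<circ> a}"
proof
  let ?w = "Transposition.transpose \<beta> \<delta> \<circ> Transposition.transpose \<alpha> \<beta>"
  fix y assume "y \<in> {y. bedge n a y \<and> bedge n y b}"
  then have ay: "bedge n a y" and yb: "bedge n y b" by simp_all
  obtain e f where ef: "e \<noteq> f" "y = Transposition.transpose e f \<circ> a" "?w e \<noteq> e" "?w f \<noteq> f"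
    by (rule bedge_middle_transpose[OF ay yb b])
  have "?w x = x" if "x \<notin> {\<alpha>, \<beta>, \<delta>}" for x
    using that by simp
  with ef(3,4) have "e \<in> {\<alpha>, \<beta>, \<delta>}" "f \<in> {\<alpha>, \<beta>, \<delta>}" by blast+
  with ef(1,2) show "y \<in> {Transposition.transpose \<alpha> \<beta> \<circ> a, Transposition.transpose \<beta> \<delta> \<circ> a,
      Transposition.transpose \<alpha> \<delta> \<circ> a}"
    by (auto simp: transpose_commute)
qed

lemma bedge_middles_disjoint:
  assumes dist: "\<alpha> \<noteq> \<beta>" "\<alpha> \<noteq> \<gamma>" "\<alpha> \<noteq> \<delta>" "\<beta> \<noteq> \<gamma>" "\<beta> \<noteq> \<delta>" "\<gamma> \<noteq> \<delta>"
    and b: "b = Transposition.transpose \<gamma> \<delta> \<circ> Transposition.transpose \<alpha> \<beta> \<circ> a"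
  shows "{y. bedge n a y \<and> bedge n y b} \<subseteq> {Transposition.transpose \<alpha> \<beta> \<circ> a, Transposition.transpose \<gamma> \<delta> \<circ> a}"
proof
  let ?w = "Transposition.transpose \<gamma> \<delta> \<circ> Transposition.transpose \<alpha> \<beta>"
  fix y assume "y \<in> {y. bedge n a y \<and> bedge n y b}"
  then have ay: "bedge n a y" and yb: "bedge n y b" by simp_all
  obtain e f where ef: "e \<noteq> f" "y = Transposition.transpose e f \<circ> a" "?w e \<noteq> e" "?w f \<noteq> f"
    and inv: "(?w \<circ> Transposition.transpose e f) \<circ> (?w \<circ> Transposition.transpose e f) = id"
    by (rule bedge_middle_transpose[OF ay yb b])
  have "?w x = x" if "x \<notin> {\<alpha>, \<beta>, \<gamma>, \<delta>}" for x
    using that by simp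
  with ef(3,4) have supp: "e \<in> {\<alpha>, \<beta>, \<gamma>, \<delta>}" "f \<in> {\<alpha>, \<beta>, \<gamma>, \<delta>}" by blast+
  \<comment> \<open>a transposition straddling the two disjoint ones turns w into a 4-cycle\<close>
  have cross: "(?w \<circ> Transposition.transpose x z) ((?w \<circ> Transposition.transpose x z) x) = z"
    if "x \<in> {\<alpha>, \<beta>}" "z \<in> {\<gamma>, \<delta>}" for x z
    using that dist dist[symmetric] by auto
  have "\<not> (e \<in> {\<alpha>, \<beta>} \<and> f \<in> {\<gamma>, \<delta>})" "\<not> (f \<in> {\<alpha>, \<beta>} \<and> e \<in> {\<gamma>, \<delta>})"
    using cross[of e f] cross[of f e] fun_cong[OF inv, of e] fun_cong[OF inv, of f] ef(1)
    by (auto simp: transpose_commute)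
  with supp ef(1) have "Transposition.transpose e f \<in> {Transposition.transpose \<alpha> \<beta>, Transposition.transpose \<gamma> \<delta>}"
    by (auto simp: transpose_commute)
  with ef(2) show "y \<in> {Transposition.transpose \<alpha> \<beta> \<circ> a, Transposition.transpose \<gamma> \<delta> \<circ> a}"
    by auto
qed

lemma card_middles_overlapping:
  assumes abd: "\<alpha> \<in> {1..n}" "\<beta> \<in> {1..n}" "\<delta> \<in> {1..n}" "\<alpha> \<noteq> \<beta>" "\<beta> \<noteq> \<delta>" "\<alpha> \<noteq> \<delta>"
    and c: "c = Transposition.transpose \<alpha> \<beta> \<circ> a" and b: "b = Transposition.transpose \<beta> \<delta> \<circ> c"
    and ac: "bedge n a c" and cb: "bedge n c b"
  shows "card {y. bedge n a y \<and> bedge n y b} = 2"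
proof -
  let ?M = "{y. bedge n a y \<and> bedge n y b}"
  have a: "a \<in> Sn n" and ap: "a permutes {1..n}" using ac by (simp_all add: bedge_def Sn_def)
  define \<pi> where "\<pi> = inv a"
  have \<pi>_inj: "\<pi> x \<noteq> \<pi> y" if "x \<noteq> y" for x y
    using that permutes_inv_eq[OF ap] unfolding \<pi>_def by metis
  have ord_ac: "\<alpha> < \<beta> \<longleftrightarrow> \<pi> \<alpha> < \<pi> \<beta>"
    using ac bedge_transpose_comp_iff[OF a abd(1,2,4)] c by (simp add: \<pi>_def)
  have ord_cb: "\<beta> < \<delta> \<longleftrightarrow> \<pi> \<alpha> < \<pi> \<delta>"
    using cb bedge_transpose_comp_comp_iff[OF a abd(1,2,2,3,5)] b c abd by (simp add: \<pi>_def)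
  define y2 where "y2 = Transposition.transpose \<beta> \<delta> \<circ> a"
  define y3 where "y3 = Transposition.transpose \<alpha> \<delta> \<circ> a"
  have b2: "b = Transposition.transpose \<alpha> \<delta> \<circ> y2"
    unfolding b c y2_def by (rule ext) (use abd in \<open>auto simp: transpose_def\<close>)
  have b3: "b = Transposition.transpose \<alpha> \<beta> \<circ> y3"
    unfolding b c y3_def by (rule ext) (use abd in \<open>auto simp: transpose_def\<close>)
  have y2M: "y2 \<in> ?M \<longleftrightarrow> (\<beta> < \<delta> \<longleftrightarrow> \<pi> \<beta> < \<pi> \<delta>) \<and> (\<alpha> < \<delta> \<longleftrightarrow> \<pi> \<alpha> < \<pi> \<beta>)"
    using bedge_transpose_comp_iff[OF a abd(2,3,5)] bedge_transpose_comp_comp_iff[OF a abd(2,3,1,3,6)] abd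
    by (simp add: b2 y2_def \<pi>_def)
  have y3M: "y3 \<in> ?M \<longleftrightarrow> (\<alpha> < \<delta> \<longleftrightarrow> \<pi> \<alpha> < \<pi> \<delta>) \<and> (\<alpha> < \<beta> \<longleftrightarrow> \<pi> \<delta> < \<pi> \<beta>)"
    using bedge_transpose_comp_iff[OF a abd(1,3,6)] bedge_transpose_comp_comp_iff[OF a abd(1,3,1,2,4)] abd
    by (simp add: b3 y3_def \<pi>_def)
  have "\<pi> \<alpha> \<noteq> \<pi> \<beta>" "\<pi> \<beta> \<noteq> \<pi> \<delta>" "\<pi> \<alpha> \<noteq> \<pi> \<delta>" using \<pi>_inj abd by auto
  then have exactly_one: "y2 \<in> ?M \<longleftrightarrow> y3 \<notin> ?M"
    unfolding y2M y3M using ord_ac ord_cb abd(4-6)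
    by (cases "\<alpha> < \<beta>"; cases "\<beta> < \<delta>"; cases "\<alpha> < \<delta>";
        cases "\<pi> \<alpha> < \<pi> \<beta>"; cases "\<pi> \<beta> < \<pi> \<delta>"; cases "\<pi> \<alpha> < \<pi> \<delta>") simp_all
  have sub: "?M \<subseteq> {c, y2, y3}"
    using bedge_middles_overlapping[OF abd(4-6), of b a n] b c by (simp add: y2_def y3_def o_assoc)
  have "c \<noteq> y2" unfolding c y2_def
    by (rule transpose_comp_neq[OF ap, where x = \<alpha>]) (use abd in simp)
  moreover have "c \<noteq> y3" unfolding c y3_def
    by (rule transpose_comp_neq[OF ap, where x = \<beta>]) (use abd in simp)
  moreover have "c \<in> ?M" using ac cb by simp
  ultimately have "?M = {c, y2} \<and> c \<noteq> y2 \<or> ?M = {c, y3} \<and> c \<noteq> y3"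
    using exactly_one sub by blast
  then show ?thesis by auto
qed

lemma card_middles_disjoint:
  assumes abgd: "\<alpha> \<in> {1..n}" "\<beta> \<in> {1..n}" "\<gamma> \<in> {1..n}" "\<delta> \<in> {1..n}"
    and dist: "\<alpha> \<noteq> \<beta>" "\<alpha> \<noteq> \<gamma>" "\<alpha> \<noteq> \<delta>" "\<beta> \<noteq> \<gamma>" "\<beta> \<noteq> \<delta>" "\<gamma> \<noteq> \<delta>"
    and c: "c = Transposition.transpose \<alpha> \<beta> \<circ> a" and b: "b = Transposition.transpose \<gamma> \<delta> \<circ> c"
    and ac: "bedge n a c" and cb: "bedge n c b"
  shows "card {y. bedge n a y \<and> bedge n y b} = 2"
proof -
  let ?M = "{y. bedge n a y \<and> bedge n y b}"
  have a: "a \<in> Sn n" and ap: "a permutes {1..n}" using ac by (simp_all add: bedge_def Sn_def)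
  have ord_ac: "\<alpha> < \<beta> \<longleftrightarrow> inv a \<alpha> < inv a \<beta>"
    using ac bedge_transpose_comp_iff[OF a abgd(1,2) dist(1)] c by simp
  have ord_cb: "\<gamma> < \<delta> \<longleftrightarrow> inv a \<gamma> < inv a \<delta>"
    using cb bedge_transpose_comp_comp_iff[OF a abgd(1-4) dist(6)] b c dist by simp
  define y2 where "y2 = Transposition.transpose \<gamma> \<delta> \<circ> a"
  have b2: "b = Transposition.transpose \<alpha> \<beta> \<circ> y2"
    unfolding b c y2_def by (rule ext) (use dist in \<open>auto simp: transpose_def\<close>)
  have "y2 \<in> ?M"
    using bedge_transpose_comp_iff[OF a abgd(3,4) dist(6)] bedge_transpose_comp_comp_iff[OF a abgd(3,4,1,2) dist(1)]
      ord_ac ord_cb dist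
    by (simp add: b2 y2_def)
  moreover have "?M \<subseteq> {c, y2}"
    using bedge_middles_disjoint[OF dist, of b a n] b c by (simp add: y2_def o_assoc)
  moreover have "c \<noteq> y2" unfolding c y2_def
    by (rule transpose_comp_neq[OF ap, where x = \<alpha>]) (use dist in simp)
  moreover have "c \<in> ?M" using ac cb by simp
  ultimately have "?M = {c, y2}" "c \<noteq> y2" by auto
  then show ?thesis by simp
qed

lemma transpose_eq_if_doubleton_eq:
  "{a, b} = {c, d} \<Longrightarrow> Transposition.transpose a b = Transposition.transpose c d"
  by (metis doubleton_eq_iff transpose_commute)

lemma doubletons_share_one_elem:
  assumes "\<alpha> \<noteq> \<beta>" "\<gamma> \<noteq> \<delta>" "{\<gamma>, \<delta>} \<noteq> {\<alpha>, \<beta>}" "\<gamma> \<in> {\<alpha>, \<beta>} \<or> \<delta> \<in> {\<alpha>, \<beta>}"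
  obtains \<alpha>' \<beta>' \<delta>' where "{\<alpha>', \<beta>'} = {\<alpha>, \<beta>}" "{\<beta>', \<delta>'} = {\<gamma>, \<delta>}"
    "\<alpha>' \<noteq> \<beta>'" "\<beta>' \<noteq> \<delta>'" "\<alpha>' \<noteq> \<delta>'"
proof -
  from assms consider "\<gamma> = \<beta>" "\<delta> \<noteq> \<alpha>" | "\<delta> = \<beta>" "\<gamma> \<noteq> \<alpha>" | "\<gamma> = \<alpha>" "\<delta> \<noteq> \<beta>" | "\<delta> = \<alpha>" "\<gamma> \<noteq> \<beta>"
    by auto
  then show ?thesis
  proof cases
    case 1
    with assms show ?thesis by (intro that[of \<alpha> \<beta> \<delta>]) auto
  next
    case 2
    with assms show ?thesis by (intro that[of \<alpha> \<beta> \<gamma>]) auto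
  next
    case 3
    with assms show ?thesis by (intro that[of \<beta> \<alpha> \<delta>]) auto
  next
    case 4
    with assms show ?thesis by (intro that[of \<beta> \<alpha> \<gamma>]) auto
  qed
qed

lemma card_bedge_middles:
  assumes ac: "bedge n a c" and cb: "bedge n c b"
  shows "card {y. bedge n a y \<and> bedge n y b} = 2"
proof -
  obtain \<alpha> \<beta> where ab: "\<alpha> \<in> {1..n}" "\<beta> \<in> {1..n}" "\<alpha> \<noteq> \<beta>" and c: "c = Transposition.transpose \<alpha> \<beta> \<circ> a"
    using bedgeE[OF ac] by metis
  obtain \<gamma> \<delta> where gd: "\<gamma> \<in> {1..n}" "\<delta> \<in> {1..n}" "\<gamma> \<noteq> \<delta>" and b: "b = Transposition.transpose \<gamma> \<delta> \<circ> c"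
    using bedgeE[OF cb] by metis
  have ne: "{\<gamma>, \<delta>} \<noteq> {\<alpha>, \<beta>}"
  proof
    assume "{\<gamma>, \<delta>} = {\<alpha>, \<beta>}"
    then have "b = a" using b c transpose_eq_if_doubleton_eq[of \<gamma> \<delta> \<alpha> \<beta>] by (simp add: o_assoc)
    with ac cb show False by (simp add: bedge_def)
  qed
  show ?thesis
  proof (cases "\<gamma> \<in> {\<alpha>, \<beta>} \<or> \<delta> \<in> {\<alpha>, \<beta>}")
    case False
    with ab gd c b ac cb show ?thesis by (intro card_middles_disjoint) auto
  next
    case True
    then obtain \<alpha>' \<beta>' \<delta>' where pairs: "{\<alpha>', \<beta>'} = {\<alpha>, \<beta>}" "{\<beta>', \<delta>'} = {\<gamma>, \<delta>}"
      and dist: "\<alpha>' \<noteq> \<beta>'" "\<beta>' \<noteq> \<delta>'" "\<alpha>' \<noteq> \<delta>'"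
      by (rule doubletons_share_one_elem[OF ab(3) gd(3) ne])
    have "\<alpha>' \<in> {1..n}" "\<beta>' \<in> {1..n}" "\<delta>' \<in> {1..n}" using pairs ab gd by (auto simp: doubleton_eq_iff)
    moreover have "c = Transposition.transpose \<alpha>' \<beta>' \<circ> a" "b = Transposition.transpose \<beta>' \<delta>' \<circ> c"
      using c b transpose_eq_if_doubleton_eq[OF pairs(1)] transpose_eq_if_doubleton_eq[OF pairs(2)] by simp_all
    ultimately show ?thesis using dist ac cb by (intro card_middles_overlapping)
  qed
qed

lemma bedge_middles_eq_other_mid:
  assumes am: "bedge n a m" and mb: "bedge n m b"
  shows "{y. bedge n a y \<and> bedge n y b} = {m, other_mid n a b m}" and "other_mid n a b m \<noteq> m"
proof -
  let ?M = "{y. bedge n a y \<and> bedge n y b}"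
  have "card ?M = 2" by (rule card_bedge_middles[OF am mb])
  moreover have "m \<in> ?M" using am mb by simp
  ultimately obtain m' where M: "?M = {m, m'}" "m' \<noteq> m"
    unfolding card_2_iff by (metis doubleton_eq_iff insertE singletonD)
  have "other_mid n a b m = m'"
    unfolding other_mid_def
  proof (rule the_equality)
    show "m' \<noteq> m \<and> bedge n a m' \<and> bedge n m' b" using M by blast
  qed (use M in blast)
  with M show "?M = {m, other_mid n a b m}" "other_mid n a b m \<noteq> m" by simp_all
qed

lemma bedge_other_mid:
  assumes "bedge n a m" "bedge n m b"
  shows "bedge n a (other_mid n a b m)" "bedge n (other_mid n a b m) b"
  using bedge_middles_eq_other_mid(1)[OF assms] by blast+

lemma other_mid_other_mid:
  assumes "bedge n a m" "bedge n m b"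
  shows "other_mid n a b (other_mid n a b m) = m"
  using bedge_middles_eq_other_mid[OF assms]
    bedge_middles_eq_other_mid[OF bedge_other_mid[OF assms]]
  by (metis doubleton_eq_iff)

lemma Paths_bedge: "xs \<in> Paths n h u v \<Longrightarrow> k < h \<Longrightarrow> bedge n (xs ! k) (xs ! Suc k)"
  by (simp add: Paths_def)

lemma length_flip [simp]: "length (flip n i xs) = length xs"
  by (simp add: flip_def)

lemma nth_flip_other: "k \<noteq> i \<Longrightarrow> flip n i xs ! k = xs ! k"
  by (simp add: flip_def)

lemma nth_flip_self:
  "i < length xs \<Longrightarrow> flip n i xs ! i = other_mid n (xs ! (i - 1)) (xs ! Suc i) (xs ! i)"
  by (simp add: flip_def)

context
  fixes n h :: nat and u v :: perm and xs :: "perm list" and i :: nat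
  assumes xs: "xs \<in> Paths n h u v" and i: "1 \<le> i" "i < h"
begin

lemma flip_window_bedge:
  "bedge n (xs ! (i - 1)) (xs ! i)" "bedge n (xs ! i) (xs ! Suc i)"
  "i < length xs"
  using Paths_bedge[OF xs, of "i - 1"] Paths_bedge[OF xs, of i] i xs by (simp_all add: Paths_def)

lemma nth_flip_neq: "flip n i xs ! i \<noteq> xs ! i"
  using bedge_middles_eq_other_mid(2)[OF flip_window_bedge(1,2)] nth_flip_self[OF flip_window_bedge(3)] by simp

lemma flip_in_Paths: "flip n i xs \<in> Paths n h u v"
proof -
  let ?ys = "flip n i xs"
  have ys_i: "?ys ! i = other_mid n (xs ! (i - 1)) (xs ! Suc i) (xs ! i)"
    by (rule nth_flip_self[OF flip_window_bedge(3)])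
  have "bedge n (?ys ! k) (?ys ! Suc k)" if "k < h" for k
  proof -
    consider "k = i - 1" | "k = i" | "k \<noteq> i - 1" "k \<noteq> i" by blast
    then show ?thesis
    proof cases
      case 1
      then show ?thesis
        using bedge_other_mid(1)[OF flip_window_bedge(1,2)] ys_i i nth_flip_other[of "i - 1" i] by simp
    next
      case 2
      then show ?thesis
        using bedge_other_mid(2)[OF flip_window_bedge(1,2)] ys_i nth_flip_other[of "Suc i" i] by simp
    next
      case 3
      then show ?thesis using Paths_bedge[OF xs that] by (simp add: nth_flip_other)
    qed
  qed
  with xs i show ?thesis by (simp add: Paths_def nth_flip_other)
qed

lemma flip_flip: "flip n i (flip n i xs) = xs"
proof -
  have "flip n i (flip n i xs) ! i = xs ! i"
    using other_mid_other_mid[OF flip_window_bedge(1,2)] nth_flip_self[OF flip_window_bedge(3)]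
      nth_flip_self[of i "flip n i xs"] flip_window_bedge(3) i
    by (simp add: nth_flip_other)
  then show ?thesis
    by (intro nth_equalityI) (simp_all add: nth_flip_other, metis nth_flip_other)
qed

end

lemma flip_rel_sym: "sym (flip_rel n h u v)"
proof (rule symI)
  fix xs ys assume "(xs, ys) \<in> flip_rel n h u v"
  then obtain i where i: "xs \<in> Paths n h u v" "1 \<le> i" "i < h" "ys = flip n i xs"
    by (auto simp: flip_rel_def)
  then have "ys \<in> Paths n h u v" "xs = flip n i ys" by (simp_all add: flip_in_Paths flip_flip)
  with i(2,3) show "(ys, xs) \<in> flip_rel n h u v" unfolding flip_rel_def by blast
qed

lemma TS_edge_iff:
  "((a, i), (c, j)) \<in> TS_edge h F \<longleftrightarrow> j = Suc i \<and> i < h \<and> (\<exists>xs\<in>F. xs ! i = a \<and> xs ! Suc i = c)"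
  unfolding TS_edge_def by blast

lemma TS_edge_level: "(p, q) \<in> TS_edge h F \<Longrightarrow> snd q = Suc (snd p)"
  unfolding TS_edge_def by auto

lemma TS_edge_vert: "(p, q) \<in> TS_edge h F \<Longrightarrow> p \<in> TS_vert h F \<and> q \<in> TS_vert h F"
  unfolding TS_edge_def TS_vert_def by force

lemma TS_edge_relpow_level: "(p, q) \<in> TS_edge h F ^^ k \<Longrightarrow> snd q = snd p + k"
proof (induction k arbitrary: q)
  case 0
  then show ?case by simp
next
  case (Suc k)
  then obtain r where "(p, r) \<in> TS_edge h F ^^ k" "(r, q) \<in> TS_edge h F"
    by (blast elim: relpow_Suc_E)
  with Suc.IH TS_edge_level show ?case by fastforce
qed

lemma TS_interval_interiorE:
  assumes "r \<in> TS_interval h F (a, i) (b, i + 2) - {(a, i), (b, i + 2)}"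
  obtains c where "r = (c, Suc i)"
    "((a, i), (c, Suc i)) \<in> TS_edge h F" "((c, Suc i), (b, i + 2)) \<in> TS_edge h F"
proof -
  from assms have le: "((a, i), r) \<in> (TS_edge h F)\<^sup>*" "(r, (b, i + 2)) \<in> (TS_edge h F)\<^sup>*"
    and ne: "r \<noteq> (a, i)" "r \<noteq> (b, i + 2)"
    unfolding TS_interval_def TS_le_def by auto
  obtain k1 k2 where k1: "((a, i), r) \<in> TS_edge h F ^^ k1" and k2: "(r, (b, i + 2)) \<in> TS_edge h F ^^ k2"
    using le rtrancl_power by blast
  have "k1 \<noteq> 0" using k1 ne(1) by (cases k1) auto
  moreover have "k2 \<noteq> 0" using k2 ne(2) by (cases k2) auto
  moreover have "i + 2 = i + k1 + k2"
    using TS_edge_relpow_level[OF k1] TS_edge_relpow_level[OF k2] by simp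
  ultimately have "k1 = 1" "k2 = 1" by auto
  with k1 k2 have e: "((a, i), r) \<in> TS_edge h F" "(r, (b, i + 2)) \<in> TS_edge h F" by simp_all
  obtain c j where rc: "r = (c, j)" by (cases r)
  with TS_edge_level[OF e(1)] have "j = Suc i" by simp
  with e rc show ?thesis by (intro that) simp_all
qed

lemma TS_interval_interiorI:
  assumes "(p, r) \<in> TS_edge h F" "(r, q) \<in> TS_edge h F"
  shows "r \<in> TS_interval h F p q - {p, q}"
proof -
  have "snd r = Suc (snd p)" "snd q = Suc (snd r)" using assms by (simp_all add: TS_edge_level)
  then have "r \<noteq> p" "r \<noteq> q" by auto
  with assms TS_edge_vert show ?thesis unfolding TS_interval_def TS_le_def by blast
qed

lemma TS_le_two_levels:
  assumes "TS_le h F (a, i) (b, i + 2)"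
  obtains c where "((a, i), (c, Suc i)) \<in> TS_edge h F" "((c, Suc i), (b, i + 2)) \<in> TS_edge h F"
proof -
  obtain k where k: "((a, i), (b, i + 2)) \<in> TS_edge h F ^^ k"
    using assms unfolding TS_le_def by (auto simp: rtrancl_power)
  then have "k = 2" using TS_edge_relpow_level by fastforce
  with k obtain r where r: "((a, i), r) \<in> TS_edge h F" "(r, (b, i + 2)) \<in> TS_edge h F"
    by (auto simp: numeral_2_eq_2 elim!: relpow_Suc_E)
  obtain c j where rc: "r = (c, j)" by (cases r)
  with TS_edge_level[OF r(1)] have "j = Suc i" by simp
  with r rc have "((a, i), (c, Suc i)) \<in> TS_edge h F" "((c, Suc i), (b, i + 2)) \<in> TS_edge h F"
    by simp_all
  then show ?thesis by (rule that)
qed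

lemma TS_edge_bedge:
  assumes "F \<subseteq> Paths n h u v" "((a, i), (c, j)) \<in> TS_edge h F"
  shows "bedge n a c"
proof -
  from assms(2) obtain xs where "xs \<in> F" "i < h" "xs ! i = a" "xs ! Suc i = c"
    unfolding TS_edge_iff by blast
  with assms(1) Paths_bedge[of xs n h u v i] show ?thesis by auto
qed

lemma length_i_TS [simp]: "length (i_TS h xs) = Suc h"
  by (simp add: i_TS_def)

lemma nth_i_TS [simp]: "k \<le> h \<Longrightarrow> i_TS h xs ! k = (xs ! k, k)"
  unfolding i_TS_def by (simp add: nth_map del: upt_Suc)

lemma i_TS_in_TS_paths:
  assumes "F \<subseteq> Paths n h u v" "xs \<in> F"
  shows "i_TS h xs \<in> TS_paths h F u v"
proof -
  have "xs \<in> Paths n h u v" using assms by blast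
  moreover have "((xs ! k, k), (xs ! Suc k, Suc k)) \<in> TS_edge h F" if "k < h" for k
    using assms(2) that unfolding TS_edge_iff by blast
  ultimately show ?thesis unfolding TS_paths_def Paths_def by simp
qed

lemma inj_on_i_TS: "inj_on (i_TS h) {xs. length xs = Suc h}"
proof (rule inj_onI)
  fix xs ys assume "xs \<in> {xs. length xs = Suc h}" "ys \<in> {xs. length xs = Suc h}"
    and eq: "i_TS h xs = i_TS h ys"
  then have len: "length xs = Suc h" "length ys = Suc h" by simp_all
  show "xs = ys"
  proof (rule nth_equalityI)
    fix k assume "k < length xs"
    then have "k \<le> h" using len by simp
    then show "xs ! k = ys ! k" using arg_cong[OF eq, of "\<lambda>ps. ps ! k"] by simp
  qed (simp add: len)
qed

lemma TS_interval_interior_finite_card_le: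
  assumes F: "F \<subseteq> Paths n h u v"
    and e: "((a, i), (c, Suc i)) \<in> TS_edge h F" "((c, Suc i), (b, i + 2)) \<in> TS_edge h F"
  shows "finite (TS_interval h F (a, i) (b, i + 2) - {(a, i), (b, i + 2)})" (is "finite ?X")
    and "card (TS_interval h F (a, i) (b, i + 2) - {(a, i), (b, i + 2)}) \<le> 2"
proof -
  let ?M = "{y. bedge n a y \<and> bedge n y b}"
  have M: "card ?M = 2" using card_bedge_middles TS_edge_bedge[OF F e(1)] TS_edge_bedge[OF F e(2)] .
  then have fin: "finite ?M" by (intro card_ge_0_finite) simp
  have sub: "?X \<subseteq> (\<lambda>y. (y, Suc i)) ` ?M"
  proof
    fix r assume "r \<in> ?X"
    then obtain y where "r = (y, Suc i)"
      "((a, i), (y, Suc i)) \<in> TS_edge h F" "((y, Suc i), (b, i + 2)) \<in> TS_edge h F"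
      by (rule TS_interval_interiorE)
    with TS_edge_bedge[OF F] show "r \<in> (\<lambda>y. (y, Suc i)) ` ?M" by blast
  qed
  with fin show "finite ?X" by (rule finite_surj)
  have "card ?X \<le> card ((\<lambda>y. (y, Suc i)) ` ?M)" using sub fin by (intro card_mono) simp_all
  also have "\<dots> \<le> 2" using card_image_le[OF fin, of "\<lambda>y. (y, Suc i)"] M by simp
  finally show "card ?X \<le> 2" .
qed

definition splice_at :: "nat \<Rightarrow> nat \<Rightarrow> 'a list \<Rightarrow> 'a list \<Rightarrow> 'a list" where
  "splice_at h i xs ys = map (\<lambda>k. if k \<le> i then xs ! k else ys ! k) [0..<Suc h]"

lemma nth_splice_at: "k \<le> h \<Longrightarrow> splice_at h i xs ys ! k = (if k \<le> i then xs ! k else ys ! k)"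
  unfolding splice_at_def by (simp add: nth_map del: upt_Suc)

lemma i_TS_splice_at_in_TS_paths:
  assumes F: "F \<subseteq> Paths n h u v" and xs: "xs \<in> F" and ys: "ys \<in> F"
    and e: "((xs ! i, i), (ys ! Suc i, Suc i)) \<in> TS_edge h F"
  shows "i_TS h (splice_at h i xs ys) \<in> TS_paths h F u v"
proof -
  let ?zs = "splice_at h i xs ys"
  have i: "i < h" using e by (simp add: TS_edge_iff)
  have "((?zs ! k, k), (?zs ! Suc k, Suc k)) \<in> TS_edge h F" if k: "k < h" for k
  proof -
    consider "Suc k \<le> i" | "k = i" | "i < k" by linarith
    then show ?thesis
    proof cases
      case 1
      with xs k show ?thesis by (auto simp: nth_splice_at TS_edge_iff)
    next
      case 2
      with e k show ?thesis by (simp add: nth_splice_at)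
    next
      case 3
      with ys k show ?thesis by (auto simp: nth_splice_at TS_edge_iff)
    qed
  qed
  moreover have "xs ! 0 = u" "ys ! h = v" using F xs ys by (auto simp: Paths_def)
  ultimately show ?thesis
    using i unfolding TS_paths_def by (simp add: nth_splice_at)
qed

definition TS_diamonds :: "nat \<Rightarrow> perm list set \<Rightarrow> bool" where
  "TS_diamonds h F \<longleftrightarrow>
     (\<forall>a b i. (a, i) \<in> TS_vert h F \<and> (b, i + 2) \<in> TS_vert h F \<and> TS_le h F (a, i) (b, i + 2)
        \<longrightarrow> card (TS_interval h F (a, i) (b, i + 2) - {(a, i), (b, i + 2)}) = 2)"

lemma TS_diamondsD:
  "TS_diamonds h F \<Longrightarrow> (a, i) \<in> TS_vert h F \<Longrightarrow> (b, i + 2) \<in> TS_vert h F \<Longrightarrow> TS_le h F (a, i) (b, i + 2)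
    \<Longrightarrow> card (TS_interval h F (a, i) (b, i + 2) - {(a, i), (b, i + 2)}) = 2"
  unfolding TS_diamonds_def by blast

lemma flip_rel_rtrancl_Paths:
  "(xs, ys) \<in> (flip_rel n h u v)\<^sup>* \<Longrightarrow> xs \<in> Paths n h u v \<Longrightarrow> ys \<in> Paths n h u v"
  by (induction rule: rtrancl_induct) (auto simp: flip_rel_def flip_in_Paths)

locale flipclass =
  fixes n h :: nat and u v :: perm and F :: "perm list set"
  assumes is_flipclass: "is_flipclass n h u v F"
begin

lemma flipclass_subset_Paths: "F \<subseteq> Paths n h u v"
  using is_flipclass flip_rel_rtrancl_Paths unfolding is_flipclass_def by blast

lemma flipclass_nonempty: "F \<noteq> {}"
  using is_flipclass unfolding is_flipclass_def by blast

lemma flipclass_rtrancl_closed: "xs \<in> F \<Longrightarrow> (xs, ys) \<in> (flip_rel n h u v)\<^sup>* \<Longrightarrow> ys \<in> F"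
  using is_flipclass unfolding is_flipclass_def by (auto dest: rtrancl_trans)

lemma flip_in_flipclass: "xs \<in> F \<Longrightarrow> 1 \<le> i \<Longrightarrow> i < h \<Longrightarrow> flip n i xs \<in> F"
  using flipclass_subset_Paths flipclass_rtrancl_closed unfolding flip_rel_def by blast

lemma flipclass_connected:
  assumes "xs \<in> F" "ys \<in> F"
  shows "(xs, ys) \<in> (flip_rel n h u v)\<^sup>*"
proof -
  obtain xs0 where F: "F = {ys. (xs0, ys) \<in> (flip_rel n h u v)\<^sup>*}"
    using is_flipclass unfolding is_flipclass_def by blast
  with assms have "(xs0, xs) \<in> (flip_rel n h u v)\<^sup>*" "(xs0, ys) \<in> (flip_rel n h u v)\<^sup>*"
    by simp_all
  then show ?thesis
    using symD[OF sym_rtrancl[OF flip_rel_sym]] rtrancl_trans by metis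
qed

lemma TS_flip_i_TS:
  assumes dia: "TS_diamonds h F" and G: "G \<in> F" and i: "1 \<le> i" "i < h"
  shows "TS_flip h F i (i_TS h G) = i_TS h (flip n i G)"
proof -
  obtain j where j: "i = Suc j" using i by (cases i) auto
  define G' where "G' = flip n i G"
  define A B where "A = (G ! j, j)" and "B = (G ! (j + 2), j + 2)"
  define p q where "p = (G ! i, i)" and "q = (G' ! i, i)"
  have GP: "G \<in> Paths n h u v" using G flipclass_subset_Paths by blast
  have G': "G' \<in> F" "G' ! j = G ! j" "G' ! (j + 2) = G ! (j + 2)" and "p \<noteq> q"
    using flip_in_flipclass[OF G i] nth_flip_neq[OF GP i] j
    by (simp_all add: G'_def p_def q_def nth_flip_other)
  have "(A, p) \<in> TS_edge h F" "(p, B) \<in> TS_edge h F"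
    using G i j unfolding A_def B_def p_def TS_edge_iff by (auto intro!: bexI[of _ G])
  moreover have "(A, q) \<in> TS_edge h F" "(q, B) \<in> TS_edge h F"
    using G' i j unfolding A_def B_def q_def TS_edge_iff by (auto intro!: bexI[of _ G'])
  ultimately have sub: "{p, q} \<subseteq> TS_interval h F A B - {A, B}"
    and le: "TS_le h F A B" and V: "A \<in> TS_vert h F" "B \<in> TS_vert h F"
    using TS_interval_interiorI TS_edge_vert unfolding TS_le_def
    by (blast intro: rtrancl_into_rtrancl)+
  have "card (TS_interval h F A B - {A, B}) = 2"
    using TS_diamondsD[OF dia] V le unfolding A_def B_def by blast
  with sub \<open>p \<noteq> q\<close> have X: "TS_interval h F A B - {A, B} = {p, q}"
    by (metis card_2_iff card_subset_eq finite.emptyI finite.insertI)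
  have ps: "i_TS h G ! (i - 1) = A" "i_TS h G ! Suc i = B" "i_TS h G ! i = p"
    using i j by (simp_all add: A_def B_def p_def)
  have "(THE s. s \<in> TS_interval h F A B - {A, B, p}) = q"
    using X \<open>p \<noteq> q\<close> by (intro the_equality) blast+
  then have "TS_flip h F i (i_TS h G) = (i_TS h G)[i := q]"
    unfolding TS_flip_def ps by simp
  also have "\<dots> = i_TS h G'"
    using i by (intro nth_equalityI) (auto simp: nth_list_update q_def G'_def nth_flip_other)
  finally show ?thesis by (simp add: G'_def)
qed

lemma TS_diamonds_if_surj:
  assumes surj: "TS_paths h F u v \<subseteq> i_TS h ` F"
  shows "TS_diamonds h F"
  unfolding TS_diamonds_def
proof (intro allI impI)
  fix a b i assume "(a, i) \<in> TS_vert h F \<and> (b, i + 2) \<in> TS_vert h F \<and> TS_le h F (a, i) (b, i + 2)"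
  then have "TS_le h F (a, i) (b, i + 2)" by simp
  then obtain c where e: "((a, i), (c, Suc i)) \<in> TS_edge h F" "((c, Suc i), (b, i + 2)) \<in> TS_edge h F"
    by (rule TS_le_two_levels)
  let ?X = "TS_interval h F (a, i) (b, i + 2) - {(a, i), (b, i + 2)}"
  obtain xs ys where xs: "xs \<in> F" "xs ! i = a" and ys: "ys \<in> F" "ys ! Suc i = c" "ys ! (i + 2) = b"
    and i: "i + 2 \<le> h"
    using e unfolding TS_edge_iff by auto
  let ?G = "splice_at h i xs ys"
  have "i_TS h ?G \<in> TS_paths h F u v"
    using i_TS_splice_at_in_TS_paths[OF flipclass_subset_Paths xs(1) ys(1)] e(1) xs(2) ys(2) by simp
  with surj have "i_TS h ?G \<in> i_TS h ` F" ..
  then obtain G where G: "G \<in> F" "i_TS h G = i_TS h ?G" by (metis imageE)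
  have "length G = Suc h" "length ?G = Suc h"
    using G(1) flipclass_subset_Paths by (auto simp: Paths_def splice_at_def)
  with G(2) have "G = ?G" by (intro inj_onD[OF inj_on_i_TS]) simp_all
  then have G_at: "G ! i = a" "G ! Suc i = c" "G ! (i + 2) = b"
    using i xs(2) ys(2,3) by (simp_all add: nth_splice_at)
  define G' where "G' = flip n (Suc i) G"
  have GP: "G \<in> Paths n h u v" using G(1) flipclass_subset_Paths by blast
  have si: "1 \<le> Suc i" "Suc i < h" using i by simp_all
  have G': "G' \<in> F" "G' ! Suc i \<noteq> c" "G' ! i = a" "G' ! (i + 2) = b"
    using flip_in_flipclass[OF G(1) si] nth_flip_neq[OF GP si] G_at
    by (simp_all add: G'_def nth_flip_other)
  have "((a, i), (G' ! Suc i, Suc i)) \<in> TS_edge h F" "((G' ! Suc i, Suc i), (b, i + 2)) \<in> TS_edge h F"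
    using G' i unfolding TS_edge_iff by (auto intro!: bexI[of _ G'])
  then have "(G' ! Suc i, Suc i) \<in> ?X" by (rule TS_interval_interiorI)
  moreover have "(c, Suc i) \<in> ?X" using e by (rule TS_interval_interiorI)
  ultimately have "{(c, Suc i), (G' ! Suc i, Suc i)} \<subseteq> ?X" by simp
  then have "card {(c, Suc i), (G' ! Suc i, Suc i)} \<le> card ?X"
    by (rule card_mono[OF TS_interval_interior_finite_card_le(1)[OF flipclass_subset_Paths e], rotated])
  with G'(2) TS_interval_interior_finite_card_le(2)[OF flipclass_subset_Paths e]
  show "card ?X = 2" by simp
qed

lemma i_TS_rtrancl_TS_flip_rel:
  assumes dia: "TS_diamonds h F" and "G \<in> F" and "(G, G') \<in> (flip_rel n h u v)\<^sup>*"
  shows "(i_TS h G, i_TS h G') \<in> (TS_flip_rel h F u v)\<^sup>*"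
  using assms(3)
proof (induction rule: rtrancl_induct)
  case base
  show ?case by simp
next
  case (step H H')
  have H: "H \<in> F" using flipclass_rtrancl_closed[OF assms(2) step(1)] .
  obtain i where i: "1 \<le> i" "i < h" "H' = flip n i H"
    using step(2) unfolding flip_rel_def by blast
  have "(i_TS h H, TS_flip h F i (i_TS h H)) \<in> TS_flip_rel h F u v"
    unfolding TS_flip_rel_def using i_TS_in_TS_paths[OF flipclass_subset_Paths H] i by blast
  with TS_flip_i_TS[OF dia H i(1,2)] i(3) step(3) show ?case by simp
qed

lemma TS_flip_rel_rtrancl_image:
  assumes dia: "TS_diamonds h F" and "(ps, qs) \<in> (TS_flip_rel h F u v)\<^sup>*" and "ps \<in> i_TS h ` F"
  shows "qs \<in> i_TS h ` F"
  using assms(2,3)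
proof (induction rule: rtrancl_induct)
  case base
  then show ?case .
next
  case (step qs qs')
  obtain i where i: "1 \<le> i" "i < h" "qs' = TS_flip h F i qs"
    using step(2) unfolding TS_flip_rel_def by blast
  obtain G where G: "G \<in> F" "qs = i_TS h G" using step(3) step(4) by blast
  with i TS_flip_i_TS[OF dia G(1) i(1,2)] flip_in_flipclass[OF G(1) i(1,2)] show ?case by simp
qed

theorem bij_i_TS_iff:
  "bij_betw (i_TS h) F (TS_paths h F u v) \<longleftrightarrow> TS_diamonds h F \<and> TS_flips_transitive h F u v"
proof
  assume "bij_betw (i_TS h) F (TS_paths h F u v)"
  then have img: "i_TS h ` F = TS_paths h F u v" by (simp add: bij_betw_def)
  then have dia: "TS_diamonds h F" using TS_diamonds_if_surj by simp
  moreover have "TS_flips_transitive h F u v"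
    unfolding TS_flips_transitive_def img[symmetric]
    using i_TS_rtrancl_TS_flip_rel[OF dia] flipclass_connected by blast
  ultimately show "TS_diamonds h F \<and> TS_flips_transitive h F u v" ..
next
  assume "TS_diamonds h F \<and> TS_flips_transitive h F u v"
  then have dia: "TS_diamonds h F" and tr: "TS_flips_transitive h F u v" by simp_all
  obtain G0 where G0: "G0 \<in> F" using flipclass_nonempty by blast
  have "inj_on (i_TS h) F"
    using inj_on_subset[OF inj_on_i_TS] flipclass_subset_Paths by (auto simp: Paths_def)
  moreover have "TS_paths h F u v \<subseteq> i_TS h ` F"
  proof
    fix ps assume "ps \<in> TS_paths h F u v"
    with tr i_TS_in_TS_paths[OF flipclass_subset_Paths G0]
    have "(i_TS h G0, ps) \<in> (TS_flip_rel h F u v)\<^sup>*" unfolding TS_flips_transitive_def by blast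
    with G0 show "ps \<in> i_TS h ` F" using TS_flip_rel_rtrancl_image[OF dia] by blast
  qed
  moreover have "i_TS h ` F \<subseteq> TS_paths h F u v"
    using i_TS_in_TS_paths[OF flipclass_subset_Paths] by blast
  ultimately show "bij_betw (i_TS h) F (TS_paths h F u v)"
    unfolding bij_betw_def by blast
qed

end

theorem lemma5p7:
  fixes n h :: nat and u v :: perm and F :: "perm list set"
  assumes "u \<in> Sn n" and "v \<in> Sn n" and "bruhat_less n u v"
    and "is_flipclass n h u v F"
  shows "bij_betw (i_TS h) F (TS_paths h F u v) \<longleftrightarrow>
         ((\<forall>a b i. (a, i) \<in> TS_vert h F \<and> (b, i + 2) \<in> TS_vert h F \<and> TS_le h F (a, i) (b, i + 2)
              \<longrightarrow> card (TS_interval h F (a, i) (b, i + 2) - {(a, i), (b, i + 2)}) = 2)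
          \<and> TS_flips_transitive h F u v)"
proof -
  interpret flipclass n h u v F by (rule flipclass.intro) (rule assms(4))
  show ?thesis using bij_i_TS_iff unfolding TS_diamonds_def .
qed

end
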